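(* Suppose the designer's preferences satisfy $A_1=A_0=\bar A\ge 0$ and $B_1=B_0=\bar B\ge 0$. Then the designer's optimal classifier (maximizer of $EU_D(\delta\mid r)$ over $\delta\in[0,1]^2$) is $\delta^*=(1,1)$ if $r(\bar A-\bar B)>0$ and $\delta^*=(0,0)$ if $r(\bar A-\bar B)<0$; and if $r=0$ or $\bar A=\bar B$, all classifiers give the designer the same expected payoff.
   Context: A unit mass of individuals $i\in[0,1]$ each privately knows a cost $\gamma_i\in\mathbb{R}$ of choosing behavior $\beta_i=1$ (compliance) rather than $\beta_i=0$. Costs are distributed according to a continuously differentiable CDF $F$ whose density $f$ is log-concave with full support on $\mathbb{R}$. A classifier is $\delta=(\delta_1,\delta_0)\in[0,1]^2$. Each individual's behavior generates a signal $s_i\in\{0,1\}$ with $\Pr[s_i=\beta_i]=\phi$, $\phi\in(\tfrac12,1]$ fixed, and the classifier assigns $d_i\in\{0,1\}$ with $\Pr[d_i=s_i\mid s_i]=\delta_{s_i}$. An individual with $d_i=1$ receives reward $r\in\mathbb{R}$. Let $\rho(\delta,\phi)=(\delta_1+\delta_0-1)(2\phi-1)$; individual $i$ chooses $\beta_i=1$ iff $\gamma_i\le r\rho(\delta,\phi)$, giving prevalence $\pi=F(r\rho(\delta,\phi))$. The designer's payoffs are $A_1$ (complier, $d_i=1$), $A_0$ (complier, $d_i=0$), $B_1$ (non-complier, $d_i=0$), $B_0$ (non-complier, $d_i=1$), with expected payoff $EU_D(\delta\mid r)=\pi\big[\phi(A_1\delta_1+A_0(1-\delta_1))+(1-\phi)(A_0\delta_0+A_1(1-\delta_0))\big]+(1-\pi)\big[\phi(B_1\delta_0+B_0(1-\delta_0))+(1-\phi)(B_0\delta_1+B_1(1-\delta_1))\big]$.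 *)

theory Defs
  imports "HOL-Analysis.Analysis"
begin

definition cost_cdf :: "(real \<Rightarrow> real) \<Rightarrow> (real \<Rightarrow> real) \<Rightarrow> bool" where
  "cost_cdf F f \<longleftrightarrow>
     mono F \<and> (F \<longlongrightarrow> 0) at_bot \<and> (F \<longlongrightarrow> 1) at_top \<and>
     (\<forall>x. (F has_real_derivative f x) (at x)) \<and> continuous_on UNIV f \<and>
     (\<forall>x. f x > 0) \<and> concave_on UNIV (\<lambda>x. ln (f x))"

definition rho :: "real \<Rightarrow> real \<Rightarrow> real \<Rightarrow> real" where
  "rho d1 d0 \<phi> = (d1 + d0 - 1) * (2 * \<phi> - 1)"

definition prevalence :: "(real \<Rightarrow> real) \<Rightarrow> real \<Rightarrow> real \<Rightarrow> real \<Rightarrow> real \<Rightarrow> real" where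
  "prevalence F r \<phi> d1 d0 = F (r * rho d1 d0 \<phi>)"

definition EU_D :: "real \<Rightarrow> real \<Rightarrow> real \<Rightarrow> real \<Rightarrow> (real \<Rightarrow> real) \<Rightarrow> real \<Rightarrow> real
                    \<Rightarrow> real \<Rightarrow> real \<Rightarrow> real" where
  "EU_D A1 A0 B1 B0 F \<phi> r d1 d0 =
     (let \<pi> = prevalence F r \<phi> d1 d0 in
      \<pi> * (\<phi> * (A1 * d1 + A0 * (1 - d1)) + (1 - \<phi>) * (A0 * d0 + A1 * (1 - d0)))
      + (1 - \<pi>) * (\<phi> * (B1 * d0 + B0 * (1 - d0)) + (1 - \<phi>) * (B0 * d1 + B1 * (1 - d1))))"

definition optimal_classifier :: "(real \<Rightarrow> real \<Rightarrow> real) \<Rightarrow> real \<Rightarrow> real \<Rightarrow> bool" where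
  "optimal_classifier EU d1 d0 \<longleftrightarrow> d1 \<in> {0..1} \<and> d0 \<in> {0..1} \<and>
     (\<forall>e1\<in>{0..1}. \<forall>e0\<in>{0..1}. EU e1 e0 \<le> EU d1 d0)"

end

theory Submission
  imports Defs
begin

text \<open>With A1 = A0 and B1 = B0 the designer's payoff no longer depends on the assignment
itself, only on prevalence: EU = B + (A - B) F(r \<rho>). Since \<rho> is a positive multiple of
d1 + d0 - 1 and F is strictly increasing, EU is a strictly monotone function of d1 + d0,
increasing if r (A - B) > 0 and decreasing if r (A - B) < 0, so the optimum over the square
is the corner (1,1), respectively (0,0); if r (A - B) = 0 it is constant.\<close>

lemma cost_cdf_strict_mono:
  assumes "cost_cdf F f"
  shows "strict_mono F"
proof (rule strict_monoI)
  fix x y :: real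
  assume "x < y"
  moreover have "\<forall>z. (F has_real_derivative f z) (at z)" "\<forall>z. f z > 0"
    using assms unfolding cost_cdf_def by auto
  ultimately show "F x < F y"
    using DERIV_pos_imp_increasing by blast
qed

lemma EU_D_symmetric_payoffs:
  "EU_D A A B B F \<phi> r d1 d0 = B + (A - B) * F (r * ((d1 + d0 - 1) * (2 * \<phi> - 1)))"
  unfolding EU_D_def prevalence_def rho_def Let_def by (simp add: algebra_simps)

lemma strict_mono_shifted_scaled:
  fixes F :: "real \<Rightarrow> real"
  assumes F: "strict_mono F" and rk: "0 < r * k" and c: "0 < c"
  shows "strict_mono (\<lambda>s. a + k * F (r * ((s - 1) * c)))"
proof (rule strict_monoI)
  fix s t :: real
  assume "s < t"
  then have st: "(s - 1) * c < (t - 1) * c"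
    using c by simp
  show "a + k * F (r * ((s - 1) * c)) < a + k * F (r * ((t - 1) * c))"
  proof (cases "r > 0")
    case True
    then have "k > 0"
      using rk by (simp add: zero_less_mult_iff)
    moreover have "F (r * ((s - 1) * c)) < F (r * ((t - 1) * c))"
      using True st F by (simp add: strict_mono_less)
    ultimately show ?thesis by simp
  next
    case False
    then have "r < 0" "k < 0"
      using rk by (auto simp: zero_less_mult_iff)
    moreover have "F (r * ((t - 1) * c)) < F (r * ((s - 1) * c))"
      using \<open>r < 0\<close> st F by (simp add: strict_mono_less)
    ultimately show ?thesis by (simp add: mult_less_cancel_left)
  qed
qed

lemma optimal_classifier_increasing_in_sum:
  fixes g :: "real \<Rightarrow> real"
  assumes g: "strict_mono g"
  shows "optimal_classifier (\<lambda>d1 d0. g (d1 + d0)) d1 d0 \<longleftrightarrow> d1 = 1 \<and> d0 = 1"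
proof
  assume "optimal_classifier (\<lambda>d1 d0. g (d1 + d0)) d1 d0"
  then have "d1 \<in> {0..1}" "d0 \<in> {0..1}"
    and max: "\<forall>e1\<in>{0..1}. \<forall>e0\<in>{0..1}. g (e1 + e0) \<le> g (d1 + d0)"
    unfolding optimal_classifier_def by auto
  moreover have "g (1 + 1) \<le> g (d1 + d0)"
    using max[rule_format, of 1 1] by simp
  ultimately show "d1 = 1 \<and> d0 = 1"
    using g by (auto simp: strict_mono_less_eq)
next
  assume "d1 = 1 \<and> d0 = 1"
  then show "optimal_classifier (\<lambda>d1 d0. g (d1 + d0)) d1 d0"
    using g unfolding optimal_classifier_def by (auto simp: strict_mono_less_eq)
qed

lemma optimal_classifier_decreasing_in_sum:
  fixes g :: "real \<Rightarrow> real"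
  assumes g: "strict_mono (\<lambda>s. - g s)"
  shows "optimal_classifier (\<lambda>d1 d0. g (d1 + d0)) d1 d0 \<longleftrightarrow> d1 = 0 \<and> d0 = 0"
proof
  assume "optimal_classifier (\<lambda>d1 d0. g (d1 + d0)) d1 d0"
  then have "d1 \<in> {0..1}" "d0 \<in> {0..1}"
    and max: "\<forall>e1\<in>{0..1}. \<forall>e0\<in>{0..1}. g (e1 + e0) \<le> g (d1 + d0)"
    unfolding optimal_classifier_def by auto
  moreover have "- g (d1 + d0) \<le> - g (0 + 0)"
    using max[rule_format, of 0 0] by simp
  ultimately show "d1 = 0 \<and> d0 = 0"
    using strict_mono_less_eq[OF g] by auto
next
  assume "d1 = 0 \<and> d0 = 0"
  moreover have "- g 0 \<le> - g (e1 + e0)" if "e1 \<in> {0..1}" "e0 \<in> {0..1}" for e1 e0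
    using that strict_mono_less_eq[OF g] by simp
  ultimately show "optimal_classifier (\<lambda>d1 d0. g (d1 + d0)) d1 d0"
    unfolding optimal_classifier_def by auto
qed

theorem proposition2:
  fixes F f :: "real \<Rightarrow> real" and \<phi> r Abar Bbar :: real
  assumes F: "cost_cdf F f"
    and phi: "1/2 < \<phi>" "\<phi> \<le> 1"
    and A: "Abar \<ge> 0" and B: "Bbar \<ge> 0"
  shows "(r * (Abar - Bbar) > 0 \<longrightarrow>
            (\<forall>d1 d0. optimal_classifier (EU_D Abar Abar Bbar Bbar F \<phi> r) d1 d0
                        \<longleftrightarrow> (d1 = 1 \<and> d0 = 1)))
       \<and> (r * (Abar - Bbar) < 0 \<longrightarrow>
            (\<forall>d1 d0. optimal_classifier (EU_D Abar Abar Bbar Bbar F \<phi> r) d1 d0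
                        \<longleftrightarrow> (d1 = 0 \<and> d0 = 0)))
       \<and> (r = 0 \<or> Abar = Bbar \<longrightarrow>
            (\<forall>d1\<in>{0..1}. \<forall>d0\<in>{0..1}. \<forall>e1\<in>{0..1}. \<forall>e0\<in>{0..1}.
               EU_D Abar Abar Bbar Bbar F \<phi> r d1 d0 = EU_D Abar Abar Bbar Bbar F \<phi> r e1 e0))"
proof -
  define g where "g s = Bbar + (Abar - Bbar) * F (r * ((s - 1) * (2 * \<phi> - 1)))" for s
  have EU: "EU_D Abar Abar Bbar Bbar F \<phi> r = (\<lambda>d1 d0. g (d1 + d0))"
    unfolding g_def by (intro ext) (simp add: EU_D_symmetric_payoffs)
  have F_mono: "strict_mono F" and c: "0 < 2 * \<phi> - 1"
    using cost_cdf_strict_mono[OF F] phi by auto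
  have "strict_mono g" if "r * (Abar - Bbar) > 0"
    unfolding g_def using strict_mono_shifted_scaled[OF F_mono that c] .
  moreover have "strict_mono (\<lambda>s. - g s)" if "r * (Abar - Bbar) < 0"
  proof -
    have "0 < r * (Bbar - Abar)"
      using that by (simp add: algebra_simps)
    from strict_mono_shifted_scaled[OF F_mono this c, of "- Bbar"]
    show ?thesis unfolding g_def by (simp add: algebra_simps)
  qed
  moreover have "g s = g t" if "r = 0 \<or> Abar = Bbar" for s t
    using that unfolding g_def by auto
  ultimately show ?thesis
    unfolding EU
    using optimal_classifier_increasing_in_sum optimal_classifier_decreasing_in_sum by auto
qed

end
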